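(* Let $\{x^k\}\subset\mathbb{R}^n$ be a bounded sequence with $x^k\neq x^{k+1}$ for all $k\in\mathbb{N}$. Suppose: (H1) there is a function $\Psi:\mathbb{R}^n\to[-\infty,\infty]$ such that $\{\Psi(x^k)\}$ is well defined (real), non-negative and converges to $0$; (H2) there is $D>0$ such that for all sufficiently large $k$, $\Psi(x^k)-\Psi(x^{k+1})\ge D\|x^k-x^{k+1}\|^2$; (H3) there are $\eta\in(0,\infty]$, a differentiable concave function $\varphi:[0,\eta)\to\mathbb{R}_+$ with $\varphi(0)=0$ and $\varphi'>0$ on $(0,\eta)$, and constants $C_1,C_2\ge0$ with $C_1+C_2>0$, such that for all sufficiently large $k$, $\Psi(x^k)<\eta$ and $\varphi'(\Psi(x^k))\,\big(C_1\|x^k-x^{k+1}\|+C_2\|x^{k-1}-x^k\|\big)\ge1$. Then for all sufficiently large $k$, $$\tfrac34\|x^k-x^{k+1}\|\le\tfrac14\|x^{k-1}-x^k\|+\frac{\max\{C_1,C_2\}}{D}\big(\varphi(\Psi(x^k))-\varphi(\Psi(x^{k+1}))\big),$$ and $\sum_{k}\|x^k-x^{k+1}\|<\infty$; in particular the sequence $\{x^k\}$ is convergent. *)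

theory Defs
  imports "HOL-Analysis.Analysis"
begin

end

theory Submission
  imports Defs
begin

text \<open>
  Set \<open>a\<^sub>k = \<parallel>x\<^sub>k - x\<^sub>k\<^sub>+\<^sub>1\<parallel>\<close>, \<open>p\<^sub>k = \<Psi>(x\<^sub>k)\<close> and \<open>\<Delta>\<^sub>k = \<phi>(p\<^sub>k) - \<phi>(p\<^sub>k\<^sub>+\<^sub>1)\<close>.
  Concavity of \<open>\<phi>\<close> gives \<open>\<Delta>\<^sub>k \<ge> \<phi>'(p\<^sub>k) (p\<^sub>k - p\<^sub>k\<^sub>+\<^sub>1) \<ge> \<phi>'(p\<^sub>k) D a\<^sub>k\<^sup>2\<close>, and
  multiplying by \<open>C\<^sub>1 a\<^sub>k + C\<^sub>2 a\<^sub>k\<^sub>-\<^sub>1\<close>, whose product with \<open>\<phi>'(p\<^sub>k)\<close> is at least 1,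
  yields \<open>a\<^sub>k\<^sup>2 \<le> (a\<^sub>k + a\<^sub>k\<^sub>-\<^sub>1) (max C\<^sub>1 C\<^sub>2 / D) \<Delta>\<^sub>k\<close>.  The AM-GM inequality turns this
  into \<open>3/4 a\<^sub>k \<le> 1/4 a\<^sub>k\<^sub>-\<^sub>1 + (max C\<^sub>1 C\<^sub>2 / D) \<Delta>\<^sub>k\<close>.  Summing, the terms \<open>\<Delta>\<^sub>k\<close>
  telescope to a bounded quantity because \<open>\<phi> \<ge> 0\<close>, so \<open>\<Sum> a\<^sub>k\<close> is finite and \<open>x\<close>
  is a Cauchy sequence.
\<close>

lemma concave_on_imp_below_tangent:
  fixes f :: "real \<Rightarrow> real"
  assumes concave: "concave_on A f" and connected: "connected A"
    and c: "c \<in> interior A" and y: "y \<in> A"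
    and deriv: "(f has_field_derivative f') (at c within A)"
  shows "f c - f y \<ge> f' * (c - y)"
proof -
  have convex: "convex_on A (\<lambda>t. - f t)"
    using concave unfolding concave_on_def .
  have "((\<lambda>t. - f t) has_field_derivative - f') (at c within A)"
    using deriv by (rule DERIV_minus)
  then have "- f y - - f c \<ge> - f' * (y - c)"
    by (rule convex_on_imp_above_tangent[OF convex connected c y])
  then show ?thesis
    by (simp add: algebra_simps)
qed

lemma interior_nonneg_below_ereal:
  "{t. 0 < t \<and> ereal t < \<eta>} \<subseteq> interior {t::real. 0 \<le> t \<and> ereal t < \<eta>}"
proof (rule interior_maximal)
  show "open {t::real. 0 < t \<and> ereal t < \<eta>}"
    by (intro open_Collect_conj open_Collect_less continuous_intros continuous_on_ereal)
qed auto

lemma three_quarters_bound_of_sq_le: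
  fixes a b v :: real
  assumes "0 \<le> a" "0 \<le> b" "0 \<le> v" and sq: "a\<^sup>2 \<le> (a + b) * v"
  shows "3/4 * a \<le> 1/4 * b + v"
proof -
  have "(a + b) * v \<le> ((a + b) / 4 + v)\<^sup>2"
    using sum_squares_ge_zero[of "(a + b) / 4 - v" 0]
    by (simp add: power2_eq_square algebra_simps)
  with sq have "a\<^sup>2 \<le> ((a + b) / 4 + v)\<^sup>2"
    by linarith
  with assms have "a \<le> (a + b) / 4 + v"
    by (simp add: power2_le_iff_abs_le abs_le_iff)
  then show ?thesis
    by (simp add: field_simps)
qed

text \<open>
  One step of the estimate with the data at index \<open>k\<close> abstracted: \<open>a, a'\<close> stand for
  \<open>a\<^sub>k, a\<^sub>k\<^sub>-\<^sub>1\<close>, \<open>s\<close> for \<open>p\<^sub>k - p\<^sub>k\<^sub>+\<^sub>1\<close>, \<open>d\<close> for \<open>\<phi>'(p\<^sub>k)\<close> and \<open>\<Delta>\<close> for \<open>\<phi>(p\<^sub>k) - \<phi>(p\<^sub>k\<^sub>+\<^sub>1)\<close>.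
\<close>
lemma sufficient_decrease_bound:
  fixes a a' s d \<Delta> D C1 C2 :: real
  assumes D: "D > 0" and a: "0 \<le> a" "0 \<le> a'" and C: "0 \<le> C1" "0 \<le> C2"
    and decrease: "D * a\<^sup>2 \<le> s"
    and tangent: "d * s \<le> \<Delta>"
    and KL: "1 \<le> d * (C1 * a + C2 * a')"
  shows "3/4 * a \<le> 1/4 * a' + max C1 C2 / D * \<Delta>"
proof -
  define b where "b = C1 * a + C2 * a'"
  define M where "M = max C1 C2"
  have "0 \<le> b"
    using a C unfolding b_def by simp
  with KL have d: "0 < d" and b: "0 < b"
    unfolding b_def by (smt (verit) mult_nonpos_nonneg mult_nonneg_nonpos)+
  have "0 \<le> D * a\<^sup>2"
    using D by simp
  then have d_decrease: "d * (D * a\<^sup>2) \<le> \<Delta>"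
    using tangent decrease d by (smt (verit) mult_left_mono)
  with d \<open>0 \<le> D * a\<^sup>2\<close> have \<Delta>: "0 \<le> \<Delta>"
    by (smt (verit) mult_nonneg_nonneg)
  have "b \<le> M * (a + a')"
    unfolding b_def M_def using a C
    by (smt (verit) distrib_left max.cobounded1 max.cobounded2 mult_right_mono)
  have "D * a\<^sup>2 \<le> (d * b) * (D * a\<^sup>2)"
    using mult_right_mono[OF KL \<open>0 \<le> D * a\<^sup>2\<close>] by (simp add: b_def)
  also have "\<dots> = b * (d * (D * a\<^sup>2))"
    by simp
  also have "\<dots> \<le> b * \<Delta>"
    using d_decrease b by (simp add: mult_left_mono)
  also have "\<dots> \<le> M * (a + a') * \<Delta>"
    using \<open>b \<le> M * (a + a')\<close> \<Delta> by (rule mult_right_mono)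
  finally have "a\<^sup>2 \<le> (a + a') * (M / D * \<Delta>)"
    using D by (simp add: field_simps)
  moreover have "0 \<le> M / D * \<Delta>"
    using C D \<Delta> unfolding M_def by simp
  ultimately show ?thesis
    using three_quarters_bound_of_sq_le a unfolding M_def by blast
qed

lemma summable_if_three_quarters_descent:
  fixes a f :: "nat \<Rightarrow> real"
  assumes nonneg: "\<And>k. 0 \<le> a k"
    and descent: "\<forall>\<^sub>F k in sequentially. 3/4 * a k \<le> 1/4 * a (k - 1) + (f k - f (Suc k))"
    and bounded: "\<forall>\<^sub>F k in sequentially. B \<le> f k"
  shows "summable a"
proof -
  obtain N where N: "\<And>k. N \<le> k \<Longrightarrow>
      3/4 * a k \<le> 1/4 * a (k - 1) + (f k - f (Suc k)) \<and> B \<le> f k"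
    using eventually_conj[OF descent bounded] unfolding eventually_sequentially by blast
  have partial: "(\<Sum>i<n. a (i + N)) / 2 + a (n + N - 1) / 4 \<le> a (N - 1) / 4 + (f N - f (n + N))"
    for n
  proof (induction n)
    case (Suc n)
    have step: "3/4 * a (n + N) \<le> 1/4 * a (n + N - 1) + (f (n + N) - f (Suc n + N))"
      using N[of "n + N"] by simp
    have "(\<Sum>i<Suc n. a (i + N)) = (\<Sum>i<n. a (i + N)) + a (n + N)"
      and "Suc n + N - 1 = n + N"
      by simp_all
    with step Suc.IH show ?case
      by (simp only:) argo
  qed simp
  have "summable (\<lambda>i. a (i + N))"
  proof (rule summableI_nonneg_bounded)
    fix n
    have "B \<le> f (n + N)" and "0 \<le> a (n + N - 1)"
      using N nonneg by simp_all
    with partial[of n] show "(\<Sum>i<n. a (i + N)) \<le> 2 * (a (N - 1) / 4 + f N - B)"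
      by argo
  qed (rule nonneg)
  then show ?thesis
    by (rule summable_iff_shift[THEN iffD1])
qed

lemma convergent_if_summable_norm_diff:
  fixes x :: "nat \<Rightarrow> 'a::banach"
  assumes "summable (\<lambda>k. norm (x k - x (Suc k)))"
  shows "convergent x"
proof -
  have "convergent (\<lambda>n. \<Sum>k<n. x k - x (Suc k))"
    using summable_norm_cancel[OF assms] by (simp only: summable_iff_convergent)
  then have "convergent (\<lambda>n. x 0 - x n)"
    by (simp only: sum_lessThan_telescope')
  then have "convergent (\<lambda>n. x 0 - (x 0 - x n))"
    by (rule convergent_diff[OF convergent_const])
  then show ?thesis
    by simp
qed

lemma desingularized_descent_step:
  fixes \<phi> \<phi>' :: "real \<Rightarrow> real" and \<eta> :: ereal
  defines "A \<equiv> {t. 0 \<le> t \<and> ereal t < \<eta>}"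
  assumes deriv: "\<forall>t\<in>A. (\<phi> has_real_derivative \<phi>' t) (at t within A)"
    and concave: "concave_on A \<phi>"
    and D: "D > 0" and a: "0 < a" "0 \<le> a'" and C: "0 \<le> C1" "0 \<le> C2"
    and p: "p \<in> A" and q: "q \<in> A"
    and decrease: "D * a\<^sup>2 \<le> p - q"
    and KL: "1 \<le> \<phi>' p * (C1 * a + C2 * a')"
  shows "3/4 * a \<le> 1/4 * a' + max C1 C2 / D * (\<phi> p - \<phi> q)"
proof -
  have "0 < D * a\<^sup>2"
    using D a by simp
  with decrease q have "0 < p"
    unfolding A_def by simp
  with p have "p \<in> interior A"
    using interior_nonneg_below_ereal unfolding A_def by blast
  moreover have "connected A"
    using concave by (intro convex_connected concave_on_imp_convex)
  moreover have "(\<phi> has_field_derivative \<phi>' p) (at p within A)"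
    using deriv p by blast
  ultimately have "\<phi>' p * (p - q) \<le> \<phi> p - \<phi> q"
    using concave q by (intro concave_on_imp_below_tangent)
  with D a C decrease KL show ?thesis
    by (intro sufficient_decrease_bound) simp_all
qed

lemma desingularized_descent:
  fixes a p :: "nat \<Rightarrow> real" and \<phi> \<phi>' :: "real \<Rightarrow> real" and \<eta> :: ereal
  defines "A \<equiv> {t. 0 \<le> t \<and> ereal t < \<eta>}"
  assumes deriv: "\<forall>t\<in>A. (\<phi> has_real_derivative \<phi>' t) (at t within A)"
    and concave: "concave_on A \<phi>" and nonneg: "\<forall>t\<in>A. 0 \<le> \<phi> t"
    and D: "D > 0" and C: "0 \<le> C1" "0 \<le> C2"
    and a_pos: "\<And>k. 0 < a k"
    and tail: "\<forall>\<^sub>F k in sequentially. D * (a k)\<^sup>2 \<le> p k - p (Suc k) \<and> p k \<in> A \<and> p (Suc k) \<in> A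
      \<and> 1 \<le> \<phi>' (p k) * (C1 * a k + C2 * a (k - 1))"
  shows "(\<forall>\<^sub>F k in sequentially.
          3/4 * a k \<le> 1/4 * a (k - 1) + max C1 C2 / D * (\<phi> (p k) - \<phi> (p (Suc k))))
    \<and> summable a"
proof
  define c where "c = max C1 C2 / D"
  show descent: "\<forall>\<^sub>F k in sequentially.
      3/4 * a k \<le> 1/4 * a (k - 1) + max C1 C2 / D * (\<phi> (p k) - \<phi> (p (Suc k)))"
    using tail
  proof eventually_elim
    case (elim k)
    then show ?case
      using desingularized_descent_step[OF deriv[unfolded A_def] concave[unfolded A_def] D a_pos
          less_imp_le[OF a_pos] C] unfolding A_def by blast
  qed
  show "summable a"
  proof (rule summable_if_three_quarters_descent)
    show "\<forall>\<^sub>F k in sequentially. 3/4 * a k \<le> 1/4 * a (k - 1) + (c * \<phi> (p k) - c * \<phi> (p (Suc k)))"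
      using descent unfolding c_def by (simp only: right_diff_distrib)
    have "0 \<le> c"
      using C D unfolding c_def by simp
    then show "\<forall>\<^sub>F k in sequentially. 0 \<le> c * \<phi> (p k)"
      using eventually_mono[OF tail] nonneg by (metis mult_nonneg_nonneg)
  qed (simp add: a_pos less_imp_le)
qed

lemma desingularized_descent_convergent:
  fixes x :: "nat \<Rightarrow> 'a::banach" and p :: "nat \<Rightarrow> real"
    and \<phi> \<phi>' :: "real \<Rightarrow> real" and \<eta> :: ereal
  defines "A \<equiv> {t. 0 \<le> t \<and> ereal t < \<eta>}"
  assumes deriv: "\<forall>t\<in>A. (\<phi> has_real_derivative \<phi>' t) (at t within A)"
    and concave: "concave_on A \<phi>" and nonneg: "\<forall>t\<in>A. 0 \<le> \<phi> t"
    and D: "D > 0" and C: "0 \<le> C1" "0 \<le> C2"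
    and distinct: "\<And>k. x k \<noteq> x (Suc k)"
    and decrease: "\<forall>\<^sub>F k in sequentially. D * (norm (x k - x (Suc k)))\<^sup>2 \<le> p k - p (Suc k)"
    and KL: "\<forall>\<^sub>F k in sequentially. p k \<in> A
      \<and> 1 \<le> \<phi>' (p k) * (C1 * norm (x k - x (Suc k)) + C2 * norm (x (k - 1) - x k))"
  shows "(\<forall>\<^sub>F k in sequentially.
          3/4 * norm (x k - x (Suc k)) \<le> 1/4 * norm (x (k - 1) - x k)
            + max C1 C2 / D * (\<phi> (p k) - \<phi> (p (Suc k))))
    \<and> summable (\<lambda>k. norm (x k - x (Suc k)))
    \<and> convergent x"
proof -
  define a where "a k = norm (x k - x (Suc k))" for k
  have a_pos: "0 < a k" for k
    using distinct unfolding a_def by simp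
  have a_pred: "a (k - 1) = norm (x (k - 1) - x k)" if "0 < k" for k
    using that unfolding a_def by simp
  have "\<forall>\<^sub>F k in sequentially. p k \<in> A"
    using KL by (rule eventually_mono) simp
  then have "\<forall>\<^sub>F k in sequentially. p (Suc k) \<in> A"
    by (rule eventually_sequentially_Suc[where P = "\<lambda>k. p k \<in> A", THEN iffD2])
  with decrease KL eventually_gt_at_top[of 0]
  have "\<forall>\<^sub>F k in sequentially. D * (a k)\<^sup>2 \<le> p k - p (Suc k) \<and> p k \<in> A \<and> p (Suc k) \<in> A
      \<and> 1 \<le> \<phi>' (p k) * (C1 * a k + C2 * a (k - 1))"
  proof eventually_elim
    case (elim k)
    then show ?case
      unfolding a_pred[OF \<open>0 < k\<close>] a_def by simp
  qed
  then obtain descent: "\<forall>\<^sub>F k in sequentially.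
          3/4 * a k \<le> 1/4 * a (k - 1) + max C1 C2 / D * (\<phi> (p k) - \<phi> (p (Suc k)))"
    and "summable a"
    using desingularized_descent[where a = a and p = p, OF deriv[unfolded A_def] concave[unfolded A_def]
        nonneg[unfolded A_def] D C a_pos] unfolding A_def by blast
  moreover have "convergent x"
    using \<open>summable a\<close> unfolding a_def by (rule convergent_if_summable_norm_diff)
  moreover have "\<forall>\<^sub>F k in sequentially.
      3/4 * a k \<le> 1/4 * norm (x (k - 1) - x k) + max C1 C2 / D * (\<phi> (p k) - \<phi> (p (Suc k)))"
    using descent eventually_gt_at_top[of 0]
  proof eventually_elim
    case (elim k)
    then show ?case
      unfolding a_pred[OF \<open>0 < k\<close>] by blast
  qed
  ultimately show ?thesis
    unfolding a_def by (intro conjI)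
qed

theorem theorem2:
  fixes x :: "nat \<Rightarrow> real ^ 'n"
    and \<Psi> :: "real ^ 'n \<Rightarrow> ereal"
    and D C1 C2 :: real
    and \<eta> :: ereal
    and \<phi> \<phi>' :: "real \<Rightarrow> real"
  assumes bdd: "bounded (range x)"
    and distinct: "\<forall>k. x k \<noteq> x (Suc k)"
    and H1_fin: "\<forall>k. \<bar>\<Psi> (x k)\<bar> \<noteq> \<infinity>"
    and H1_nonneg: "\<forall>k. \<Psi> (x k) \<ge> 0"
    and H1_lim: "(\<lambda>k. \<Psi> (x k)) \<longlonglongrightarrow> 0"
    and H2_D: "D > 0"
    and H2: "\<forall>\<^sub>F k in sequentially.
               \<Psi> (x k) - \<Psi> (x (Suc k)) \<ge> ereal (D * (norm (x k - x (Suc k)))\<^sup>2)"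
    and H3_eta: "\<eta> > 0"
    and H3_deriv: "\<forall>t \<in> {t. 0 \<le> t \<and> ereal t < \<eta>}.
                     (\<phi> has_real_derivative \<phi>' t) (at t within {t. 0 \<le> t \<and> ereal t < \<eta>})"
    and H3_concave: "concave_on {t. 0 \<le> t \<and> ereal t < \<eta>} \<phi>"
    and H3_nonneg: "\<forall>t \<in> {t. 0 \<le> t \<and> ereal t < \<eta>}. \<phi> t \<ge> 0"
    and H3_zero: "\<phi> 0 = 0"
    and H3_pos: "\<forall>t. 0 < t \<and> ereal t < \<eta> \<longrightarrow> \<phi>' t > 0"
    and H3_C: "C1 \<ge> 0" "C2 \<ge> 0" "C1 + C2 > 0"
    and H3: "\<forall>\<^sub>F k in sequentially. \<Psi> (x k) < \<eta> \<and>
               \<phi>' (real_of_ereal (\<Psi> (x k))) *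
                 (C1 * norm (x k - x (Suc k)) + C2 * norm (x (k - 1) - x k)) \<ge> 1"
  shows "(\<forall>\<^sub>F k in sequentially.
            3/4 * norm (x k - x (Suc k)) \<le> 1/4 * norm (x (k - 1) - x k)
              + max C1 C2 / D * (\<phi> (real_of_ereal (\<Psi> (x k))) - \<phi> (real_of_ereal (\<Psi> (x (Suc k))))))
         \<and> summable (\<lambda>k. norm (x k - x (Suc k)))
         \<and> convergent x"
proof -
  define p where "p k = real_of_ereal (\<Psi> (x k))" for k
  have \<Psi>_p: "\<Psi> (x k) = ereal (p k)" for k
    using H1_fin unfolding p_def by (metis ereal_real')
  have p_nonneg: "0 \<le> p k" for k
    using H1_nonneg \<Psi>_p[of k] by (metis ereal_less_eq(5))
  have decrease: "\<forall>\<^sub>F k in sequentially. D * (norm (x k - x (Suc k)))\<^sup>2 \<le> p k - p (Suc k)"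
    using H2 by (rule eventually_mono) (simp add: \<Psi>_p)
  have KL: "\<forall>\<^sub>F k in sequentially. p k \<in> {t. 0 \<le> t \<and> ereal t < \<eta>}
      \<and> 1 \<le> \<phi>' (p k) * (C1 * norm (x k - x (Suc k)) + C2 * norm (x (k - 1) - x k))"
    using H3 by (rule eventually_mono) (simp add: \<Psi>_p p_nonneg flip: p_def)
  show ?thesis
    using desingularized_descent_convergent[where x = x and p = p, OF H3_deriv H3_concave
        H3_nonneg H2_D H3_C(1,2) distinct[rule_format] decrease KL]
    unfolding p_def .
qed

end
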